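(* On a two-letter alphabet, there exists a $2$-regular word of length $n\ge 1$ if and only if $n=4k$ for some integer $k\ge 2$.
   Context: For a word $u=u_1\cdots u_m$ over an alphabet $\mathcal A$ with $b$ letters and an integer $r\ge -1$, $u$ is $r$-regular if for every $k=0,1,\dots,r$ the sum $\sum_{1\le t\le m,\ u_t=c} t^k$ is the same for all letters $c\in\mathcal A$ (a letter not occurring contributes $0$). Here $b=2$. *)

theory Defs
  imports Main
begin

definition pos_power_sum :: "'a list \<Rightarrow> 'a \<Rightarrow> nat \<Rightarrow> nat" where
  "pos_power_sum u c k = (\<Sum>t \<in> {t \<in> {1..length u}. u ! (t - 1) = c}. t ^ k)"

text \<open>u is r-regular over alphabet A (r may be -1, hence int).\<close>
definition regular_word :: "'a set \<Rightarrow> int \<Rightarrow> 'a list \<Rightarrow> bool" where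
  "regular_word A r u \<longleftrightarrow> set u \<subseteq> A \<and>
     (\<forall>k::nat. int k \<le> r \<longrightarrow> (\<forall>c\<in>A. \<forall>d\<in>A. pos_power_sum u c k = pos_power_sum u d k))"

end

theory Submission
  imports Defs
begin

text \<open>Shifting all positions of a word by \<open>m\<close> turns its power sums of order \<open>k\<close> into binomial
  combinations of those of order \<open>\<le> k\<close>, so \<open>r\<close>-regular words are closed under concatenation;
  the regular words \<open>abbabaab\<close> (length 8) and \<open>babaaabbbaba\<close> (length 12) followed by copies of
  the first one give every length \<open>4k\<close> with \<open>k \<ge> 2\<close>.
  Conversely the two letters share the sums \<open>\<Sum>t\<^sup>k\<close> over all positions equally, so \<open>k = 0\<close> forces
  \<open>n\<close> even and \<open>k = 1\<close> forces \<open>4 dvd n (n + 1)\<close>, i.e. \<open>4 dvd n\<close>; length 4 is excluded by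
  \<open>k = 2\<close>, since no two positions in \<open>{1..4}\<close> have sum 5 and sum of squares 15.\<close>

lemma pos_power_sum_conv_lessThan:
  "pos_power_sum u c k = (\<Sum>t<length u. if u ! t = c then (t + 1) ^ k else 0)"
proof -
  have "pos_power_sum u c k = (\<Sum>t\<in>{1..length u}. if u ! (t - 1) = c then t ^ k else 0)"
    unfolding pos_power_sum_def by (subst sum.inter_filter) auto
  also have "\<dots> = (\<Sum>t\<in>Suc ` {..<length u}. if u ! (t - 1) = c then t ^ k else 0)"
    by (simp add: image_Suc_lessThan)
  also have "\<dots> = (\<Sum>t<length u. if u ! t = c then (t + 1) ^ k else 0)"
    by (subst sum.reindex) (auto cong: if_cong)
  finally show ?thesis .
qed

lemma pos_power_sum_append:
  "pos_power_sum (u @ v) c k =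
     pos_power_sum u c k + (\<Sum>j\<le>k. (k choose j) * length u ^ (k - j) * pos_power_sum v c j)"
proof -
  let ?m = "length u"
  have split: "(\<Sum>t<?m + l. f t) = (\<Sum>t<?m. f t) + (\<Sum>t<l. f (?m + t))"
    for l and f :: "nat \<Rightarrow> nat"
    by (induction l) (simp_all add: add_ac)
  have binomial: "(?m + t + 1) ^ k = (\<Sum>j\<le>k. (k choose j) * ?m ^ (k - j) * (t + 1) ^ j)" for t
    using binomial_ring[of "t + 1" ?m k] by (simp add: add_ac mult_ac)
  have "(\<Sum>t<length v. if v ! t = c then (?m + t + 1) ^ k else 0)
      = (\<Sum>t<length v. \<Sum>j\<le>k. (k choose j) * ?m ^ (k - j) * (if v ! t = c then (t + 1) ^ j else 0))"
    by (rule sum.cong[OF refl]) (simp add: binomial[simplified])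
  also have "\<dots> = (\<Sum>j\<le>k. (k choose j) * ?m ^ (k - j) * pos_power_sum v c j)"
    by (simp add: sum.swap[of _ "{..k}"] sum_distrib_left pos_power_sum_conv_lessThan)
  finally show ?thesis
    unfolding pos_power_sum_conv_lessThan length_append split
    by (simp add: nth_append add_ac)
qed

lemma regular_word_Nil: "regular_word A r []"
  by (simp add: regular_word_def pos_power_sum_def)

lemma regular_word_append:
  assumes u: "regular_word A r u" and v: "regular_word A r v"
  shows "regular_word A r (u @ v)"
proof -
  have equal_sums: "pos_power_sum w c j = pos_power_sum w d j"
    if "regular_word A r w" "int j \<le> r" "c \<in> A" "d \<in> A" for w j c d
    using that unfolding regular_word_def by blast
  have "pos_power_sum (u @ v) c k = pos_power_sum (u @ v) d k"
    if k: "int k \<le> r" and cd: "c \<in> A" "d \<in> A" for k c d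
  proof -
    have "(\<Sum>j\<le>k. (k choose j) * length u ^ (k - j) * pos_power_sum v c j)
        = (\<Sum>j\<le>k. (k choose j) * length u ^ (k - j) * pos_power_sum v d j)"
    proof (rule sum.cong[OF refl])
      fix j assume "j \<in> {..k}"
      with k have "int j \<le> r" by simp
      then show "(k choose j) * length u ^ (k - j) * pos_power_sum v c j
               = (k choose j) * length u ^ (k - j) * pos_power_sum v d j"
        using equal_sums[OF v _ cd] by simp
    qed
    then show ?thesis
      unfolding pos_power_sum_append using equal_sums[OF u k cd] by simp
  qed
  moreover have "set (u @ v) \<subseteq> A"
    using u v unfolding regular_word_def by simp
  ultimately show ?thesis
    unfolding regular_word_def by blast
qed

lemma regular_word_concat:
  "(\<And>u. u \<in> set us \<Longrightarrow> regular_word A r u) \<Longrightarrow> regular_word A r (concat us)"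
  by (induction us) (simp_all add: regular_word_Nil regular_word_append)

lemma regular_word_mono: "regular_word A r u \<Longrightarrow> s \<le> r \<Longrightarrow> regular_word A s u"
  unfolding regular_word_def by (meson order_trans)

lemma regular_word_pair_iff:
  "regular_word {a, b} r u \<longleftrightarrow>
     set u \<subseteq> {a, b} \<and> (\<forall>k. int k \<le> r \<longrightarrow> pos_power_sum u a k = pos_power_sum u b k)"
  unfolding regular_word_def by auto

lemma int_le_2_iff: "int k \<le> 2 \<longleftrightarrow> k = 0 \<or> k = 1 \<or> k = 2"
  by auto

lemma regular_word_length_8: "a \<noteq> b \<Longrightarrow> regular_word {a, b} 2 [a, b, b, a, b, a, a, b]"
  unfolding regular_word_pair_iff pos_power_sum_conv_lessThan int_le_2_iff
  by (auto simp: lessThan_nat_numeral power2_eq_square)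

lemma regular_word_length_12:
  "a \<noteq> b \<Longrightarrow> regular_word {a, b} 2 [b, a, b, a, a, a, b, b, b, a, b, a]"
  unfolding regular_word_pair_iff pos_power_sum_conv_lessThan int_le_2_iff
  by (auto simp: lessThan_nat_numeral power2_eq_square)

lemma pos_power_sum_pair_add:
  assumes "set u \<subseteq> {a, b}" and "a \<noteq> b"
  shows "pos_power_sum u a k + pos_power_sum u b k = (\<Sum>t<length u. (t + 1) ^ k)"
  unfolding pos_power_sum_conv_lessThan sum.distrib[symmetric]
proof (rule sum.cong[OF refl])
  fix t assume "t \<in> {..<length u}"
  then have "u ! t \<in> {a, b}"
    using assms(1) nth_mem by fastforce
  with assms(2) show "(if u ! t = a then (t + 1) ^ k else 0) + (if u ! t = b then (t + 1) ^ k else 0)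
                    = (t + 1) ^ k"
    by auto
qed

lemma four_dvd_length_if_regular_word:
  assumes "regular_word {a, b} 1 u" and "a \<noteq> b"
  shows "4 dvd length u"
proof -
  let ?n = "length u"
  have total: "2 * pos_power_sum u a k = (\<Sum>t<?n. (t + 1) ^ k)" if "k \<le> 1" for k
    using pos_power_sum_pair_add[of u a b k] assms that
    unfolding regular_word_pair_iff by simp
  have gauss: "2 * (\<Sum>t<n. t + 1) = n * (n + 1)" for n :: nat
    by (induction n) simp_all
  have "2 * pos_power_sum u a 1 = (\<Sum>t<?n. t + 1)"
    using total[of 1] by simp
  with gauss[of ?n] have count_1: "4 * pos_power_sum u a 1 = ?n * (?n + 1)"
    by linarith
  have "2 * pos_power_sum u a 0 = ?n"
    using total[of 0] by simp
  then obtain m where m: "?n = 2 * m"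
    by metis
  with count_1 have "2 * pos_power_sum u a 1 = m * (2 * m + 1)"
    by (simp add: algebra_simps)
  then have "even m"
    by (metis dvd_triv_left even_mult_iff odd_add even_add odd_one)
  with m show ?thesis
    by auto
qed

lemma no_regular_word_of_length_4:
  assumes "regular_word {a, b} 2 u" and "a \<noteq> b"
  shows "length u \<noteq> 4"
proof
  assume "length u = 4"
  then obtain x1 x2 x3 x4 where u: "u = [x1, x2, x3, x4]"
    by (auto simp: numeral_eq_Suc length_Suc_conv)
  have letters: "x1 \<in> {a, b}" "x2 \<in> {a, b}" "x3 \<in> {a, b}" "x4 \<in> {a, b}"
    using assms(1) unfolding u regular_word_def by auto
  have "pos_power_sum u a k = pos_power_sum u b k" if "k \<le> 2" for k
    using assms(1) that unfolding regular_word_pair_iff by simp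
  from this[of 0] this[of 1] this[of 2] letters assms(2) show False
    unfolding u pos_power_sum_conv_lessThan
    by (simp add: lessThan_nat_numeral) (elim disjE; simp add: power2_eq_square)
qed

lemma regular_word_of_length_4k:
  assumes "a \<noteq> b" and "k \<ge> 2"
  shows "\<exists>u. length u = 4 * k \<and> regular_word {a, b} 2 u"
proof -
  let ?w8 = "[a, b, b, a, b, a, a, b]"
  have extend: "regular_word {a, b} 2 (w @ concat (replicate q ?w8))"
    if "regular_word {a, b} 2 w" for w q
  proof (rule regular_word_append[OF that regular_word_concat])
    show "regular_word {a, b} 2 v" if "v \<in> set (replicate q ?w8)" for v
      using that regular_word_length_8[OF assms(1)] by simp
  qed
  have length_extend: "length (w @ concat (replicate q ?w8)) = length w + 8 * q" for w :: "'a list" and q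
    by (induction q) simp_all
  obtain w q where w: "regular_word {a, b} 2 w" and length_w: "length w + 8 * q = 4 * k"
  proof -
    have "(\<exists>q. k = 2 + 2 * q) \<or> (\<exists>q. k = 3 + 2 * q)"
      using assms(2) by presburger
    then show thesis
      using that[OF regular_word_length_8[OF assms(1)]] that[OF regular_word_length_12[OF assms(1)]]
      by auto
  qed
  show ?thesis
    using extend[OF w, of q] length_extend[of w q] length_w by metis
qed

theorem mainTheorem10:
  fixes A :: "'a set" and n :: nat
  assumes "card A = 2" and "n \<ge> 1"
  shows "(\<exists>u. length u = n \<and> regular_word A 2 u) \<longleftrightarrow> (\<exists>k::nat. k \<ge> 2 \<and> n = 4 * k)"
proof -
  obtain a b where A: "A = {a, b}" and "a \<noteq> b"
    using assms(1) by (meson card_2_iff)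
  show ?thesis
  proof
    assume "\<exists>u. length u = n \<and> regular_word A 2 u"
    then obtain u where n: "length u = n" and u: "regular_word {a, b} 2 u"
      unfolding A by blast
    have "4 dvd n"
      using four_dvd_length_if_regular_word[OF regular_word_mono[OF u] \<open>a \<noteq> b\<close>] n by simp
    then obtain k where k: "n = 4 * k" ..
    moreover have "k \<noteq> 0" and "k \<noteq> 1"
      using k assms(2) no_regular_word_of_length_4[OF u \<open>a \<noteq> b\<close>] n by auto
    ultimately show "\<exists>k. k \<ge> 2 \<and> n = 4 * k"
      by auto
  next
    assume "\<exists>k. k \<ge> 2 \<and> n = 4 * k"
    then show "\<exists>u. length u = n \<and> regular_word A 2 u"
      unfolding A using regular_word_of_length_4k[OF \<open>a \<noteq> b\<close>] by blast
  qed
qed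

end
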